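(* Let $G=\mathbb{Z}_2\times\mathbb{Z}_4$ and let $\theta$ be a normalised orthomorphism of $G$. Then: (i) $|A_{44}\cap\theta(A_{44})|=|A_{44}\cap\theta(A_{24})|=|A_{42}\cap\theta(A_{44})|=|A_{42}\cap\theta(A_{24})|=1$. (ii) If $A_{22}=\{u\}$, then $\theta(A_{42})=\{u,\ u\theta(u)\}$ and $A_{24}=\{\theta(u),\ u\theta(u)\}$. (iii) If $A_{22}=\{u\}$, then $\{g^{-1}\theta(g): g\in A_{44}\}=\{u,\theta(u)\}$.
   Context: $G$ is written multiplicatively with identity $e$; $o(g)$ is the order of $g$. A normalised orthomorphism of $G$ is a bijection $\theta\colon G\to G$ with $\theta(e)=e$ such that $x\mapsto x^{-1}\theta(x)$ is also a bijection of $G$. For such $\theta$: $A_{44}=\{x: o(x)=4, o(\theta(x))=4\}$, $A_{42}=\{x: o(x)=4, o(\theta(x))=2\}$, $A_{24}=\{x: o(x)=2, o(\theta(x))=4\}$, $A_{22}=\{x: o(x)=2, o(\theta(x))=2\}$; $\theta(S)$ denotes the image of a set $S$. *)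

theory Defs
  imports "HOL-Algebra.Algebra"
begin

definition Z2Z4 :: "(int \<times> int) monoid" where
  "Z2Z4 = DirProd (integer_mod_group 2) (integer_mod_group 4)"

definition normalised_orthomorphism :: "('a, 'b) monoid_scheme \<Rightarrow> ('a \<Rightarrow> 'a) \<Rightarrow> bool" where
  "normalised_orthomorphism G \<theta> \<longleftrightarrow>
     bij_betw \<theta> (carrier G) (carrier G) \<and> \<theta> \<one>\<^bsub>G\<^esub> = \<one>\<^bsub>G\<^esub> \<and>
     bij_betw (\<lambda>x. inv\<^bsub>G\<^esub> x \<otimes>\<^bsub>G\<^esub> \<theta> x) (carrier G) (carrier G)"

definition A_set :: "('a, 'b) monoid_scheme \<Rightarrow> ('a \<Rightarrow> 'a) \<Rightarrow> nat \<Rightarrow> nat \<Rightarrow> 'a set" where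
  "A_set G \<theta> i j = {x \<in> carrier G. group.ord G x = i \<and> group.ord G (\<theta> x) = j}"

end

theory Submission
  imports Defs
begin

text \<open>
  Write \<open>\<delta>(x) = x\<inverse>\<theta>(x)\<close>. An element of \<open>\<int>\<^sub>2 \<times> \<int>\<^sub>4\<close> has order 4 iff its second
  coordinate is odd, and parity of the second coordinate is a homomorphism onto \<open>\<int>\<^sub>2\<close>; hence
  \<open>\<delta>(x)\<close> has order 4 iff exactly one of \<open>x\<close>, \<open>\<theta>(x)\<close> has. Counting the preimages of the four
  elements of order 4 under the bijections \<open>id\<close>, \<open>\<theta>\<close> and \<open>\<delta>\<close> gives
  \<open>|A44| + |A42| = |A44| + |A24| = |A42| + |A24| = 4\<close>, so each of these sets has two elements.
  Any two disjoint pairs of elements of order 4 have the same product, so if \<open>\<theta>(A44)\<close> were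
  \<open>A44\<close> or its complement \<open>A42\<close>, then \<open>\<theta>\<close> would preserve the product of the two elements
  of \<open>A44\<close>, and the two values of \<open>\<delta>\<close> on \<open>A44\<close>, which are self-inverse, would coincide. For (ii) and (iii): the elements of order 2 are \<open>u\<close>, \<open>\<theta>(u)\<close> and \<open>u\<theta>(u)\<close>,
  and \<open>\<delta>\<close> maps \<open>{e} \<union> A44 \<union> A22\<close> onto the elements of order at most 2, with \<open>\<delta>(u) = u\<theta>(u)\<close>.
\<close>

lemma bij_betw_image_Collect:
  assumes "bij_betw f A A"
  shows "f ` {x \<in> A. P (f x)} = {y \<in> A. P y}"
proof
  show "f ` {x \<in> A. P (f x)} \<subseteq> {y \<in> A. P y}"
    using assms by (auto dest: bij_betw_apply)
  show "{y \<in> A. P y} \<subseteq> f ` {x \<in> A. P (f x)}"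
  proof
    fix y assume "y \<in> {y \<in> A. P y}"
    moreover obtain x where "x \<in> A" "y = f x"
      using \<open>y \<in> {y \<in> A. P y}\<close> bij_betw_imp_surj_on[OF assms] by blast
    ultimately show "y \<in> f ` {x \<in> A. P (f x)}" by blast
  qed
qed

lemma card_Collect_bij_betw: "bij_betw f A A \<Longrightarrow> card {x \<in> A. P (f x)} = card {y \<in> A. P y}"
proof -
  assume bij: "bij_betw f A A"
  then have "inj_on f {x \<in> A. P (f x)}"
    by (auto simp: bij_betw_def intro: inj_on_subset)
  then have "card (f ` {x \<in> A. P (f x)}) = card {x \<in> A. P (f x)}"
    by (rule card_image)
  then show ?thesis
    by (simp add: bij_betw_image_Collect[OF bij])
qed

lemma card_Int_add_card_Int:
  "finite A \<Longrightarrow> A \<subseteq> B \<union> C \<Longrightarrow> B \<inter> C = {} \<Longrightarrow> card (A \<inter> B) + card (A \<inter> C) = card A"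
proof -
  assume "finite A" "A \<subseteq> B \<union> C" "B \<inter> C = {}"
  moreover have "A \<inter> B \<union> A \<inter> C = A" "A \<inter> B \<inter> (A \<inter> C) = {}"
    using \<open>A \<subseteq> B \<union> C\<close> \<open>B \<inter> C = {}\<close> by blast+
  ultimately show ?thesis
    using card_Un_disjoint[of "A \<inter> B" "A \<inter> C"] by simp
qed

lemma insert_insert_cancel:
  assumes "insert a (insert b S) = insert a (insert b T)" "a \<notin> S" "b \<notin> S" "a \<notin> T" "b \<notin> T"
  shows "S = T"
proof -
  have "S = insert a (insert b S) - {a, b}"
    using assms(2,3) by auto
  also have "\<dots> = insert a (insert b T) - {a, b}"
    by (simp only: assms(1))
  also have "\<dots> = T"
    using assms(4,5) by auto
  finally show ?thesis .
qed

lemma normalised_orthomorphism_ne_one: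
  assumes "normalised_orthomorphism G \<theta>" "monoid G" "x \<in> carrier G" "x \<noteq> \<one>\<^bsub>G\<^esub>"
  shows "\<theta> x \<noteq> \<one>\<^bsub>G\<^esub>"
proof
  assume "\<theta> x = \<one>\<^bsub>G\<^esub>"
  moreover have "inj_on \<theta> (carrier G)" "\<theta> \<one>\<^bsub>G\<^esub> = \<one>\<^bsub>G\<^esub>"
    using assms(1) by (simp_all add: normalised_orthomorphism_def bij_betw_def)
  ultimately show False
    using inj_onD[of \<theta> "carrier G" x "\<one>\<^bsub>G\<^esub>"] monoid.one_closed[OF assms(2)] assms(3,4) by simp
qed

lemma (in group) normalised_orthomorphism_ne_self:
  assumes "normalised_orthomorphism G \<theta>" "x \<in> carrier G" "x \<noteq> \<one>"
  shows "\<theta> x \<noteq> x"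
proof
  let ?\<delta> = "\<lambda>x. inv x \<otimes> \<theta> x"
  assume "\<theta> x = x"
  then have "?\<delta> x = ?\<delta> \<one>"
    using assms(1,2) by (simp add: normalised_orthomorphism_def)
  moreover have "inj_on ?\<delta> (carrier G)"
    using assms(1) by (simp add: normalised_orthomorphism_def bij_betw_def)
  ultimately show False
    using inj_onD[of ?\<delta> "carrier G" x \<one>] assms(2,3) by simp
qed

lemma comm_group_Z2Z4: "comm_group Z2Z4"
proof -
  have "group Z2Z4"
    unfolding Z2Z4_def by (intro DirProd_group group_integer_mod_group)
  then show ?thesis
    by (rule group.group_comm_groupI) (simp add: Z2Z4_def mult_DirProd' add.commute)
qed

lemma carrier_Z2Z4: "carrier Z2Z4 = {0,1} \<times> {0,1,2,3}"
proof -
  have "{0..<2::int} = {0,1}" "{0..<4::int} = {0,1,2,3}" by auto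
  then show ?thesis by (simp add: Z2Z4_def carrier_integer_mod_group)
qed

lemma one_Z2Z4: "\<one>\<^bsub>Z2Z4\<^esub> = (0,0)"
  by (simp add: Z2Z4_def)

lemma mult_Z2Z4: "x \<otimes>\<^bsub>Z2Z4\<^esub> y = ((fst x + fst y) mod 2, (snd x + snd y) mod 4)"
  by (simp add: Z2Z4_def mult_DirProd')

lemma pow_Z2Z4: "x [^]\<^bsub>Z2Z4\<^esub> (n::nat) = ((int n * fst x) mod 2, (int n * snd x) mod 4)"
  by (induction n) (simp_all add: one_Z2Z4 mult_Z2Z4 mod_add_right_eq algebra_simps)

lemma ord_Z2Z4:
  assumes "x \<in> carrier Z2Z4"
  shows "group.ord Z2Z4 x = (if x = (0,0) then 1 else if odd (snd x) then 4 else 2)"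
proof -
  have "x [^]\<^bsub>Z2Z4\<^esub> n = \<one>\<^bsub>Z2Z4\<^esub> \<longleftrightarrow>
          (if x = (0,0) then 1 else if odd (snd x) then 4 else 2) dvd n" for n :: nat
    using assms unfolding carrier_Z2Z4 pow_Z2Z4 one_Z2Z4 by auto presburger+
  then show ?thesis
    using group.ord_unique[OF comm_group.axioms(2)[OF comm_group_Z2Z4] assms] by blast
qed

interpretation Z2Z4: comm_group Z2Z4
  by (rule comm_group_Z2Z4)

lemma Z2Z4_ord_eq_4_iff: "x \<in> carrier Z2Z4 \<Longrightarrow> Z2Z4.ord x = 4 \<longleftrightarrow> odd (snd x)"
  by (simp add: ord_Z2Z4)

lemma Z2Z4_elements_of_order_4:
  "{x \<in> carrier Z2Z4. Z2Z4.ord x = 4} = {(0,1),(0,3),(1,1),(1,3)}"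
  by (auto simp: carrier_Z2Z4 ord_Z2Z4)

lemma Z2Z4_elements_of_order_2:
  "{x \<in> carrier Z2Z4. Z2Z4.ord x = 2} = {(0,2),(1,0),(1,2)}"
  by (auto simp: carrier_Z2Z4 ord_Z2Z4)

lemma Z2Z4_ord_2_or_4_iff:
  "x \<in> carrier Z2Z4 \<Longrightarrow> Z2Z4.ord x = 2 \<or> Z2Z4.ord x = 4 \<longleftrightarrow> x \<noteq> \<one>\<^bsub>Z2Z4\<^esub>"
  by (simp add: ord_Z2Z4 one_Z2Z4)

lemma Z2Z4_ord_mult_eq_4_iff:
  "x \<in> carrier Z2Z4 \<Longrightarrow> y \<in> carrier Z2Z4 \<Longrightarrow>
     Z2Z4.ord (x \<otimes>\<^bsub>Z2Z4\<^esub> y) = 4 \<longleftrightarrow> (Z2Z4.ord x = 4 \<longleftrightarrow> Z2Z4.ord y \<noteq> 4)"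
  by (simp add: Z2Z4_ord_eq_4_iff) (simp add: mult_Z2Z4, presburger)

lemma Z2Z4_mult_self_eq_one:
  "x \<in> carrier Z2Z4 \<Longrightarrow> Z2Z4.ord x \<noteq> 4 \<Longrightarrow> x \<otimes>\<^bsub>Z2Z4\<^esub> x = \<one>\<^bsub>Z2Z4\<^esub>"
  by (simp add: Z2Z4_ord_eq_4_iff mult_Z2Z4 one_Z2Z4) presburger

lemma Z2Z4_mult_complementary_pairs_of_order_4:
  assumes "{x1, x2, y1, y2} \<subseteq> {x \<in> carrier Z2Z4. Z2Z4.ord x = 4}" "distinct [x1, x2, y1, y2]"
  shows "x1 \<otimes>\<^bsub>Z2Z4\<^esub> x2 = y1 \<otimes>\<^bsub>Z2Z4\<^esub> y2"
proof -
  have "x1 \<in> {(0,1),(0,3),(1,1),(1,3)}" "x2 \<in> {(0,1),(0,3),(1,1),(1,3)}"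
       "y1 \<in> {(0,1),(0,3),(1,1),(1,3)}" "y2 \<in> {(0,1),(0,3),(1,1),(1,3)}"
    using assms(1) unfolding Z2Z4_elements_of_order_4 by auto
  then show ?thesis
    using assms(2) by (elim insertE emptyE; simp add: mult_Z2Z4)
qed

lemma Z2Z4_elements_of_order_2_eq:
  assumes "{a, b} \<subseteq> {x \<in> carrier Z2Z4. Z2Z4.ord x = 2}" "a \<noteq> b"
  shows "{x \<in> carrier Z2Z4. Z2Z4.ord x = 2} = {a, b, a \<otimes>\<^bsub>Z2Z4\<^esub> b}"
proof -
  have "a \<in> {(0,2),(1,0),(1,2)}" "b \<in> {(0,2),(1,0),(1,2)}"
    using assms(1) unfolding Z2Z4_elements_of_order_2 by auto
  then show ?thesis
    using assms(2) unfolding Z2Z4_elements_of_order_2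
    by (elim insertE emptyE; simp add: mult_Z2Z4 insert_commute)
qed

locale Z2Z4_orthomorphism =
  fixes \<theta> :: "int \<times> int \<Rightarrow> int \<times> int"
  assumes normalised: "normalised_orthomorphism Z2Z4 \<theta>"
begin

abbreviation A :: "nat \<Rightarrow> nat \<Rightarrow> (int \<times> int) set"
  where "A \<equiv> A_set Z2Z4 \<theta>"

abbreviation \<delta> :: "int \<times> int \<Rightarrow> int \<times> int"
  where "\<delta> x \<equiv> inv\<^bsub>Z2Z4\<^esub> x \<otimes>\<^bsub>Z2Z4\<^esub> \<theta> x"

lemma bij_theta: "bij_betw \<theta> (carrier Z2Z4) (carrier Z2Z4)"
  and theta_one: "\<theta> \<one>\<^bsub>Z2Z4\<^esub> = \<one>\<^bsub>Z2Z4\<^esub>"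
  and bij_delta: "bij_betw \<delta> (carrier Z2Z4) (carrier Z2Z4)"
  using normalised by (simp_all add: normalised_orthomorphism_def)

lemma theta_closed: "x \<in> carrier Z2Z4 \<Longrightarrow> \<theta> x \<in> carrier Z2Z4"
  using bij_theta by (rule bij_betw_apply)

lemma ord_theta_2_or_4_iff:
  "x \<in> carrier Z2Z4 \<Longrightarrow> Z2Z4.ord (\<theta> x) = 2 \<or> Z2Z4.ord (\<theta> x) = 4 \<longleftrightarrow> x \<noteq> \<one>\<^bsub>Z2Z4\<^esub>"
  using normalised_orthomorphism_ne_one[OF normalised Z2Z4.monoid_axioms, of x] theta_one
  by (auto simp: Z2Z4_ord_2_or_4_iff theta_closed)

lemma ord_delta_eq_4_iff:
  "x \<in> carrier Z2Z4 \<Longrightarrow> Z2Z4.ord (\<delta> x) = 4 \<longleftrightarrow> (Z2Z4.ord x = 4 \<longleftrightarrow> Z2Z4.ord (\<theta> x) \<noteq> 4)"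
  by (simp add: Z2Z4_ord_mult_eq_4_iff theta_closed)

lemma A_subset_carrier: "A i j \<subseteq> carrier Z2Z4"
  by (auto simp: A_set_def)

lemma finite_A: "finite (A i j)"
  by (rule finite_subset[OF A_subset_carrier]) (simp add: carrier_Z2Z4)

lemma inj_on_theta: "inj_on \<theta> S" if "S \<subseteq> carrier Z2Z4"
  using bij_theta that by (auto simp: bij_betw_def intro: inj_on_subset)

lemma inj_on_delta: "inj_on \<delta> S" if "S \<subseteq> carrier Z2Z4"
  using bij_delta that by (auto simp: bij_betw_def intro: inj_on_subset)

lemma A_disjoint: "(i, j) \<noteq> (k, l) \<Longrightarrow> A i j \<inter> A k l = {}"
  by (auto simp: A_set_def)

lemma card_A_Un: "(i, j) \<noteq> (k, l) \<Longrightarrow> card (A i j \<union> A k l) = card (A i j) + card (A k l)"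
  by (rule card_Un_disjoint[OF finite_A finite_A]) (auto simp: A_set_def)

lemma order_4_eq_A44_Un_A42: "{x \<in> carrier Z2Z4. Z2Z4.ord x = 4} = A 4 4 \<union> A 4 2" (is "?L = ?R")
proof (rule Set.set_eqI)
  fix x
  show "x \<in> ?L \<longleftrightarrow> x \<in> ?R"
    using Z2Z4_ord_2_or_4_iff[of x] ord_theta_2_or_4_iff[of x] ord_delta_eq_4_iff[of x]
    by (auto simp: A_set_def theta_one)
qed

lemma order_2_eq_A24_Un_A22: "{x \<in> carrier Z2Z4. Z2Z4.ord x = 2} = A 2 4 \<union> A 2 2" (is "?L = ?R")
proof (rule Set.set_eqI)
  fix x
  show "x \<in> ?L \<longleftrightarrow> x \<in> ?R"
    using Z2Z4_ord_2_or_4_iff[of x] ord_theta_2_or_4_iff[of x] ord_delta_eq_4_iff[of x]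
    by (auto simp: A_set_def theta_one)
qed

lemma theta_order_4_eq_A44_Un_A24: "{x \<in> carrier Z2Z4. Z2Z4.ord (\<theta> x) = 4} = A 4 4 \<union> A 2 4" (is "?L = ?R")
proof (rule Set.set_eqI)
  fix x
  show "x \<in> ?L \<longleftrightarrow> x \<in> ?R"
    using Z2Z4_ord_2_or_4_iff[of x] ord_theta_2_or_4_iff[of x] ord_delta_eq_4_iff[of x]
    by (auto simp: A_set_def theta_one)
qed

lemma theta_order_2_eq_A42_Un_A22: "{x \<in> carrier Z2Z4. Z2Z4.ord (\<theta> x) = 2} = A 4 2 \<union> A 2 2" (is "?L = ?R")
proof (rule Set.set_eqI)
  fix x
  show "x \<in> ?L \<longleftrightarrow> x \<in> ?R"
    using Z2Z4_ord_2_or_4_iff[of x] ord_theta_2_or_4_iff[of x] ord_delta_eq_4_iff[of x]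
    by (auto simp: A_set_def theta_one)
qed

lemma delta_order_4_eq_A42_Un_A24: "{x \<in> carrier Z2Z4. Z2Z4.ord (\<delta> x) = 4} = A 4 2 \<union> A 2 4" (is "?L = ?R")
proof (rule Set.set_eqI)
  fix x
  show "x \<in> ?L \<longleftrightarrow> x \<in> ?R"
    using Z2Z4_ord_2_or_4_iff[of x] ord_theta_2_or_4_iff[of x] ord_delta_eq_4_iff[of x]
    by (auto simp: A_set_def theta_one)
qed

lemma delta_order_not_4_eq:
  "{x \<in> carrier Z2Z4. Z2Z4.ord (\<delta> x) \<noteq> 4} = insert \<one>\<^bsub>Z2Z4\<^esub> (A 4 4 \<union> A 2 2)" (is "?L = ?R")
proof (rule Set.set_eqI)
  fix x
  show "x \<in> ?L \<longleftrightarrow> x \<in> ?R"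
    using Z2Z4_ord_2_or_4_iff[of x] ord_theta_2_or_4_iff[of x] ord_delta_eq_4_iff[of x]
    by (auto simp: A_set_def theta_one)
qed

lemma card_A44: "card (A 4 4) = 2"
  and card_A42: "card (A 4 2) = 2"
proof -
  have order_4: "card {x \<in> carrier Z2Z4. Z2Z4.ord x = 4} = 4"
    by (simp add: Z2Z4_elements_of_order_4)
  have "card (A 4 4) + card (A 4 2) = 4"
    using order_4 by (simp add: order_4_eq_A44_Un_A42 card_A_Un)
  moreover have "card (A 4 4) + card (A 2 4) = 4"
    using card_Collect_bij_betw[OF bij_theta, of "\<lambda>y. Z2Z4.ord y = 4"] order_4
    by (simp add: theta_order_4_eq_A44_Un_A24 card_A_Un)
  moreover have "card (A 4 2) + card (A 2 4) = 4"
    using card_Collect_bij_betw[OF bij_delta, of "\<lambda>y. Z2Z4.ord y = 4"] order_4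
    by (simp add: delta_order_4_eq_A42_Un_A24 card_A_Un)
  ultimately show "card (A 4 4) = 2" "card (A 4 2) = 2"
    by linarith+
qed

lemma mult_theta_ne_mult_on_A44:
  assumes A44: "A 4 4 = {x1, x2}" "x1 \<noteq> x2"
  shows "\<theta> x1 \<otimes>\<^bsub>Z2Z4\<^esub> \<theta> x2 \<noteq> x1 \<otimes>\<^bsub>Z2Z4\<^esub> x2"
proof
  assume eq: "\<theta> x1 \<otimes>\<^bsub>Z2Z4\<^esub> \<theta> x2 = x1 \<otimes>\<^bsub>Z2Z4\<^esub> x2"
  have x: "x1 \<in> carrier Z2Z4" "x2 \<in> carrier Z2Z4" "Z2Z4.ord x1 = 4" "Z2Z4.ord (\<theta> x1) = 4"
    using A44 by (auto simp: A_set_def)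
  then have \<theta>x: "\<theta> x1 \<in> carrier Z2Z4" "\<theta> x2 \<in> carrier Z2Z4"
    by (simp_all add: theta_closed)
  have "\<delta> x1 \<otimes>\<^bsub>Z2Z4\<^esub> \<delta> x2 = inv\<^bsub>Z2Z4\<^esub> (x1 \<otimes>\<^bsub>Z2Z4\<^esub> x2) \<otimes>\<^bsub>Z2Z4\<^esub> (\<theta> x1 \<otimes>\<^bsub>Z2Z4\<^esub> \<theta> x2)"
    using x \<theta>x by (simp add: Z2Z4.inv_mult Z2Z4.m_ac)
  also have "\<dots> = \<one>\<^bsub>Z2Z4\<^esub>"
    using x eq by simp
  also have "\<dots> = \<delta> x1 \<otimes>\<^bsub>Z2Z4\<^esub> \<delta> x1"
    using x \<theta>x by (intro Z2Z4_mult_self_eq_one[symmetric]) (simp_all add: ord_delta_eq_4_iff)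
  finally have "\<delta> x2 = \<delta> x1"
    using x \<theta>x by simp
  then show False
    using inj_on_delta[of "{x1, x2}"] x assms(2) by (auto dest: inj_onD)
qed

lemma card_A44_Int_theta_A44: "card (A 4 4 \<inter> \<theta> ` A 4 4) = 1"
proof -
  obtain x1 x2 where A44: "A 4 4 = {x1, x2}" "x1 \<noteq> x2"
    using card_A44 by (auto simp: card_2_iff)
  then have x: "x1 \<in> carrier Z2Z4" "x2 \<in> carrier Z2Z4"
    using A_subset_carrier by auto
  have "\<theta> x1 \<noteq> \<theta> x2"
    using inj_on_theta[of "{x1, x2}"] x A44(2) by (auto dest: inj_onD)
  have "x1 \<in> A 4 4" "x2 \<in> A 4 4"
    using A44(1) by simp_all
  then have "\<theta> x1 \<in> {x \<in> carrier Z2Z4. Z2Z4.ord x = 4}" "\<theta> x2 \<in> {x \<in> carrier Z2Z4. Z2Z4.ord x = 4}"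
    by (simp_all add: A_set_def theta_closed)
  then have \<theta>x: "\<theta> x1 \<in> A 4 4 \<union> A 4 2" "\<theta> x2 \<in> A 4 4 \<union> A 4 2"
    by (simp_all add: order_4_eq_A44_Un_A42)
  have "\<not> (\<theta> x1 \<in> A 4 4 \<and> \<theta> x2 \<in> A 4 4)"
  proof
    assume "\<theta> x1 \<in> A 4 4 \<and> \<theta> x2 \<in> A 4 4"
    then have "\<theta> x1 \<in> {x1, x2}" "\<theta> x2 \<in> {x1, x2}"
      unfolding A44(1) by simp_all
    then have "\<theta> x1 = x1 \<and> \<theta> x2 = x2 \<or> \<theta> x1 = x2 \<and> \<theta> x2 = x1"
      using \<open>\<theta> x1 \<noteq> \<theta> x2\<close> by auto
    then have "\<theta> x1 \<otimes>\<^bsub>Z2Z4\<^esub> \<theta> x2 = x1 \<otimes>\<^bsub>Z2Z4\<^esub> x2"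
      using x Z2Z4.m_comm by metis
    with mult_theta_ne_mult_on_A44[OF A44] show False ..
  qed
  moreover have "\<not> (\<theta> x1 \<in> A 4 2 \<and> \<theta> x2 \<in> A 4 2)"
  proof
    assume \<theta>x_A42: "\<theta> x1 \<in> A 4 2 \<and> \<theta> x2 \<in> A 4 2"
    have "{x1, x2, \<theta> x1, \<theta> x2} \<subseteq> {x \<in> carrier Z2Z4. Z2Z4.ord x = 4}"
      using A44(1) \<theta>x_A42 unfolding order_4_eq_A44_Un_A42 by blast
    moreover have "distinct [x1, x2, \<theta> x1, \<theta> x2]"
      using \<open>x1 \<in> A 4 4\<close> \<open>x2 \<in> A 4 4\<close> A44(2) \<theta>x_A42 \<open>\<theta> x1 \<noteq> \<theta> x2\<close> A_disjoint[of 4 4 4 2]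
      by auto
    ultimately have "x1 \<otimes>\<^bsub>Z2Z4\<^esub> x2 = \<theta> x1 \<otimes>\<^bsub>Z2Z4\<^esub> \<theta> x2"
      by (rule Z2Z4_mult_complementary_pairs_of_order_4)
    with mult_theta_ne_mult_on_A44[OF A44] show False by simp
  qed
  ultimately have "\<theta> x1 \<in> A 4 4 \<and> \<theta> x2 \<notin> A 4 4 \<or> \<theta> x1 \<notin> A 4 4 \<and> \<theta> x2 \<in> A 4 4"
    using \<theta>x A_disjoint[of 4 4 4 2] by blast
  moreover have "\<theta> ` A 4 4 = {\<theta> x1, \<theta> x2}"
    using A44(1) by simp
  ultimately show ?thesis
    by (auto simp: Int_insert_right)
qed

lemma theta_A44_Un_theta_A24: "\<theta> ` A 4 4 \<union> \<theta> ` A 2 4 = {x \<in> carrier Z2Z4. Z2Z4.ord x = 4}"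
  using bij_betw_image_Collect[OF bij_theta, of "\<lambda>y. Z2Z4.ord y = 4"]
  by (simp add: theta_order_4_eq_A44_Un_A24 image_Un)

lemma theta_image_disjoint: "(i, j) \<noteq> (k, l) \<Longrightarrow> \<theta> ` A i j \<inter> \<theta> ` A k l = {}"
  using inj_on_image_Int[OF inj_on_theta[OF order_refl] A_subset_carrier A_subset_carrier, of i j k l]
  by (simp add: A_disjoint)

lemma card_A4_Int_theta_A4:
  "card (A 4 4 \<inter> \<theta> ` A 4 4) = 1 \<and> card (A 4 4 \<inter> \<theta> ` A 2 4) = 1
   \<and> card (A 4 2 \<inter> \<theta> ` A 4 4) = 1 \<and> card (A 4 2 \<inter> \<theta> ` A 2 4) = 1"
proof -
  have "card (\<theta> ` A 4 4) = 2"
    using card_A44 card_image[OF inj_on_theta[OF A_subset_carrier]] by simp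
  moreover have "card (\<theta> ` A 4 4 \<inter> A 4 4) + card (\<theta> ` A 4 4 \<inter> A 4 2) = card (\<theta> ` A 4 4)"
    using theta_A44_Un_theta_A24 order_4_eq_A44_Un_A42 A_disjoint[of 4 4 4 2]
    by (intro card_Int_add_card_Int) (auto intro: finite_A)
  moreover have "card (A 4 4 \<inter> \<theta> ` A 4 4) + card (A 4 4 \<inter> \<theta> ` A 2 4) = card (A 4 4)"
    using theta_A44_Un_theta_A24 order_4_eq_A44_Un_A42 theta_image_disjoint[of 4 4 2 4]
    by (intro card_Int_add_card_Int finite_A) auto
  moreover have "card (A 4 2 \<inter> \<theta> ` A 4 4) + card (A 4 2 \<inter> \<theta> ` A 2 4) = card (A 4 2)"
    using theta_A44_Un_theta_A24 order_4_eq_A44_Un_A42 theta_image_disjoint[of 4 4 2 4]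
    by (intro card_Int_add_card_Int finite_A) auto
  ultimately show ?thesis
    using card_A44_Int_theta_A44 card_A44 card_A42 by (simp add: Int_commute)
qed

context
  fixes u assumes A22: "A 2 2 = {u}"
begin

lemma u_order_2: "u \<in> carrier Z2Z4" "\<theta> u \<in> carrier Z2Z4" "Z2Z4.ord u = 2" "Z2Z4.ord (\<theta> u) = 2"
proof -
  have "u \<in> A 2 2"
    using A22 by simp
  then show "u \<in> carrier Z2Z4" "\<theta> u \<in> carrier Z2Z4" "Z2Z4.ord u = 2" "Z2Z4.ord (\<theta> u) = 2"
    by (simp_all add: A_set_def theta_closed)
qed

lemma u_distinct:
  "u \<noteq> \<one>\<^bsub>Z2Z4\<^esub>" "\<theta> u \<noteq> \<one>\<^bsub>Z2Z4\<^esub>" "\<theta> u \<noteq> u"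
  "u \<otimes>\<^bsub>Z2Z4\<^esub> \<theta> u \<noteq> u" "u \<otimes>\<^bsub>Z2Z4\<^esub> \<theta> u \<noteq> \<theta> u"
proof -
  show "u \<noteq> \<one>\<^bsub>Z2Z4\<^esub>" "\<theta> u \<noteq> \<one>\<^bsub>Z2Z4\<^esub>"
    using u_order_2 by auto
  then show "\<theta> u \<noteq> u" "u \<otimes>\<^bsub>Z2Z4\<^esub> \<theta> u \<noteq> u" "u \<otimes>\<^bsub>Z2Z4\<^esub> \<theta> u \<noteq> \<theta> u"
    using group.normalised_orthomorphism_ne_self[OF Z2Z4.is_group normalised] u_order_2 by simp_all
qed

lemma order_2_eq_u_theta_u: "{x \<in> carrier Z2Z4. Z2Z4.ord x = 2} = {u, \<theta> u, u \<otimes>\<^bsub>Z2Z4\<^esub> \<theta> u}"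
  using u_order_2 u_distinct(3) by (intro Z2Z4_elements_of_order_2_eq) auto

lemma A24_eq: "A 2 4 = {\<theta> u, u \<otimes>\<^bsub>Z2Z4\<^esub> \<theta> u}"
proof -
  have "A 2 4 = {u, \<theta> u, u \<otimes>\<^bsub>Z2Z4\<^esub> \<theta> u} - {u}"
    using order_2_eq_A24_Un_A22 order_2_eq_u_theta_u A_disjoint[of 2 4 2 2, simplified] A22 by blast
  also have "\<dots> = {\<theta> u, u \<otimes>\<^bsub>Z2Z4\<^esub> \<theta> u}"
    using u_distinct by auto
  finally show ?thesis .
qed

lemma theta_A42_eq: "\<theta> ` A 4 2 = {u, u \<otimes>\<^bsub>Z2Z4\<^esub> \<theta> u}"
proof -
  have "\<theta> ` A 4 2 \<union> \<theta> ` A 2 2 = {u, \<theta> u, u \<otimes>\<^bsub>Z2Z4\<^esub> \<theta> u}"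
    using bij_betw_image_Collect[OF bij_theta, of "\<lambda>y. Z2Z4.ord y = 2"]
    by (simp add: theta_order_2_eq_A42_Un_A22 image_Un order_2_eq_u_theta_u)
  then have "\<theta> ` A 4 2 = {u, \<theta> u, u \<otimes>\<^bsub>Z2Z4\<^esub> \<theta> u} - {\<theta> u}"
    using theta_image_disjoint[of 4 2 2 2] A22 by auto
  also have "\<dots> = {u, u \<otimes>\<^bsub>Z2Z4\<^esub> \<theta> u}"
    using u_distinct by auto
  finally show ?thesis .
qed

lemma delta_u: "\<delta> u = u \<otimes>\<^bsub>Z2Z4\<^esub> \<theta> u"
proof -
  have "inv\<^bsub>Z2Z4\<^esub> u = u"
    using u_order_2 by (intro Z2Z4.inv_equality Z2Z4_mult_self_eq_one) simp_all
  then show ?thesis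
    by simp
qed

lemma delta_A44_eq: "\<delta> ` A 4 4 = {u, \<theta> u}"
proof -
  have "{y \<in> carrier Z2Z4. Z2Z4.ord y \<noteq> 4} = insert \<one>\<^bsub>Z2Z4\<^esub> {x \<in> carrier Z2Z4. Z2Z4.ord x = 2}"
    using Z2Z4_ord_2_or_4_iff by force
  then have "\<delta> ` insert \<one>\<^bsub>Z2Z4\<^esub> (A 4 4 \<union> A 2 2) = {\<one>\<^bsub>Z2Z4\<^esub>, u, \<theta> u, u \<otimes>\<^bsub>Z2Z4\<^esub> \<theta> u}"
    using bij_betw_image_Collect[OF bij_delta, of "\<lambda>y. Z2Z4.ord y \<noteq> 4"]
    by (simp add: delta_order_not_4_eq order_2_eq_u_theta_u)
  then have image: "insert \<one>\<^bsub>Z2Z4\<^esub> (insert (u \<otimes>\<^bsub>Z2Z4\<^esub> \<theta> u) (\<delta> ` A 4 4))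
      = insert \<one>\<^bsub>Z2Z4\<^esub> (insert (u \<otimes>\<^bsub>Z2Z4\<^esub> \<theta> u) {u, \<theta> u})"
    by (simp add: A22 delta_u theta_one insert_commute)
  have "\<delta> ` A 4 4 \<inter> \<delta> ` {\<one>\<^bsub>Z2Z4\<^esub>, u} = \<delta> ` (A 4 4 \<inter> {\<one>\<^bsub>Z2Z4\<^esub>, u})"
    using u_order_2 A_subset_carrier
    by (intro inj_on_image_Int[symmetric, OF inj_on_delta[OF order_refl]]) auto
  also have "A 4 4 \<inter> {\<one>\<^bsub>Z2Z4\<^esub>, u} = {}"
    using u_order_2 by (auto simp: A_set_def)
  finally have "\<one>\<^bsub>Z2Z4\<^esub> \<notin> \<delta> ` A 4 4" "u \<otimes>\<^bsub>Z2Z4\<^esub> \<theta> u \<notin> \<delta> ` A 4 4"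
    by (auto simp: delta_u theta_one)
  then show ?thesis
    by (rule insert_insert_cancel[OF image]) (use u_distinct in auto)
qed

end

end

theorem corollary2:
  fixes \<theta> :: "int \<times> int \<Rightarrow> int \<times> int"
  assumes "normalised_orthomorphism Z2Z4 \<theta>"
  shows "(card (A_set Z2Z4 \<theta> 4 4 \<inter> \<theta> ` A_set Z2Z4 \<theta> 4 4) = 1
       \<and> card (A_set Z2Z4 \<theta> 4 4 \<inter> \<theta> ` A_set Z2Z4 \<theta> 2 4) = 1
       \<and> card (A_set Z2Z4 \<theta> 4 2 \<inter> \<theta> ` A_set Z2Z4 \<theta> 4 4) = 1
       \<and> card (A_set Z2Z4 \<theta> 4 2 \<inter> \<theta> ` A_set Z2Z4 \<theta> 2 4) = 1)
     \<and> (\<forall>u. A_set Z2Z4 \<theta> 2 2 = {u} \<longrightarrow>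
           \<theta> ` A_set Z2Z4 \<theta> 4 2 = {u, u \<otimes>\<^bsub>Z2Z4\<^esub> \<theta> u}
         \<and> A_set Z2Z4 \<theta> 2 4 = {\<theta> u, u \<otimes>\<^bsub>Z2Z4\<^esub> \<theta> u})
     \<and> (\<forall>u. A_set Z2Z4 \<theta> 2 2 = {u} \<longrightarrow>
           (\<lambda>g. inv\<^bsub>Z2Z4\<^esub> g \<otimes>\<^bsub>Z2Z4\<^esub> \<theta> g) ` A_set Z2Z4 \<theta> 4 4 = {u, \<theta> u})"
proof -
  interpret Z2Z4_orthomorphism \<theta>
    by (rule Z2Z4_orthomorphism.intro) (rule assms)
  show ?thesis
    using card_A4_Int_theta_A4 theta_A42_eq A24_eq delta_A44_eq by blast
qed

end
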